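(* Let $w = 1+z$. Then, as formal power series in $x$ whose coefficients are polynomials in $z$, $$\sum_{n \ge 0} F_{n,n}(z)\, x^n \;=\; \frac{1}{\sqrt{(wx+1)^2 - 4w^2 x}}.$$ Here the square root is the formal power series in $x$ with constant term $1$.
   Context: Let $\mathbb{N} = \{0,1,2,\dots\}$. For $(p,q) \in \mathbb{N}^2$ and $n \in \mathbb{N}$, an unrestricted generalized jump path of length $n$ starting at $(p,q)$ is a sequence $(x_0, \dots, x_n)$ of points of $\mathbb{N}^2$ satisfying three conditions: - $x_0 = (p,q)$; - for every $i$, each coordinate of $x_{i+1}$ is at most the corresponding coordinate of $x_i$; - $x_{i+1} \ne x_i$ for every $i$. Let $u((p,q),n)$ denote the number of such paths, and define the polynomial $F_{p,q}(z) = \sum_{k=0}^{p+q} u((p,q),k)\, z^k$. *)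

theory Defs
  imports "HOL-Computational_Algebra.Polynomial" "HOL-Computational_Algebra.Formal_Power_Series"
begin

text \<open>Unrestricted generalized jump paths of length n starting at a point s of N^2,
  represented as lists [x_0, ..., x_n] of length n+1.\<close>
definition ugj_paths :: "nat \<times> nat \<Rightarrow> nat \<Rightarrow> (nat \<times> nat) list set" where
  "ugj_paths s n = {xs. length xs = Suc n \<and> xs ! 0 = s \<and>
     (\<forall>i<n. fst (xs ! Suc i) \<le> fst (xs ! i) \<and> snd (xs ! Suc i) \<le> snd (xs ! i)
            \<and> xs ! Suc i \<noteq> xs ! i)}"

definition u :: "nat \<times> nat \<Rightarrow> nat \<Rightarrow> nat" where
  "u s n = card (ugj_paths s n)"

definition F :: "nat \<Rightarrow> nat \<Rightarrow> int poly" where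
  "F p q = (\<Sum>k\<le>p+q. monom (int (u (p, q) k)) k)"

end

theory Submission
  imports Defs
begin

text \<open>A path from s either stops or first jumps to a point t strictly below s, so
  F s = 1 + z * (sum of F t over these t). Taking mixed differences and using w = 1 + z turns
  this into F(p+1,q+1) = w (F(p,q+1) + F(p+1,q) - F(p,q)), F(p+1,0) = w F(p,0),
  F(0,q+1) = w F(0,q), which is solved by F(p,q) = [y^q] (w + w z y)^p (1 + w y)^q.
  Hence F(n,n) is the central coefficient r(n) = [y^n] (a + b y + c y^2)^n with a = w,
  b = w (2w - 1), c = w^2 z. Comparing coefficients in P (P^n)' = n P' P^n yields
  (n+1) r(n+1) = (2n+1) b r(n) - n (b^2 - 4ac) r(n-1), which says exactly that
  R = sum r(n) x^n and D = 1 - 2bx + (b^2 - 4ac) x^2 satisfy 2 R' D + R D' = 0. So R^2 D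
  has derivative 0, hence R^2 D = 1, and S = R D is the square root of D. With the values
  of a, b, c above, b^2 - 4ac = w^2 and D is the discriminant of the theorem.\<close>

definition strictly_below :: "nat \<times> nat \<Rightarrow> (nat \<times> nat) set" where
  "strictly_below s = ({..fst s} \<times> {..snd s}) - {s}"

lemma finite_strictly_below: "finite (strictly_below s)"
  unfolding strictly_below_def by auto

lemma strictly_below_iff: "t \<in> strictly_below s \<longleftrightarrow> fst t \<le> fst s \<and> snd t \<le> snd s \<and> t \<noteq> s"
  unfolding strictly_below_def by (cases s, cases t) auto

lemma ugj_paths_0: "ugj_paths s 0 = {[s]}"
  unfolding ugj_paths_def by (auto simp: length_Suc_conv)

lemma ugj_paths_Suc: "ugj_paths s (Suc n) = (\<Union>t\<in>strictly_below s. (#) s ` ugj_paths t n)"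
proof (intro equalityI subsetI)
  fix xs assume "xs \<in> ugj_paths s (Suc n)"
  then obtain ys where xs: "xs = s # ys" and "length ys = Suc n"
    and steps: "\<forall>i<Suc n. fst (xs ! Suc i) \<le> fst (xs ! i) \<and> snd (xs ! Suc i) \<le> snd (xs ! i)
                   \<and> xs ! Suc i \<noteq> xs ! i"
    unfolding ugj_paths_def by (cases xs) auto
  then have "ys \<in> ugj_paths (ys ! 0) n"
    unfolding ugj_paths_def by auto
  moreover have "ys ! 0 \<in> strictly_below s"
    using steps[rule_format, of 0] by (simp add: xs strictly_below_iff)
  ultimately show "xs \<in> (\<Union>t\<in>strictly_below s. (#) s ` ugj_paths t n)"
    unfolding xs by blast
next
  fix xs assume "xs \<in> (\<Union>t\<in>strictly_below s. (#) s ` ugj_paths t n)"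
  then obtain t ys where "t \<in> strictly_below s" "ys \<in> ugj_paths t n" and xs: "xs = s # ys"
    by blast
  then show "xs \<in> ugj_paths s (Suc n)"
    unfolding ugj_paths_def strictly_below_iff by (auto simp: less_Suc_eq_0_disj)
qed

lemma finite_ugj_paths: "finite (ugj_paths s n)"
  by (induction n arbitrary: s) (simp_all add: ugj_paths_0 ugj_paths_Suc finite_strictly_below)

lemma u_0: "u s 0 = 1"
  by (simp add: u_def ugj_paths_0)

lemma u_Suc: "u s (Suc n) = (\<Sum>t\<in>strictly_below s. u t n)"
proof -
  have "u s (Suc n) = (\<Sum>t\<in>strictly_below s. card ((#) s ` ugj_paths t n))"
    unfolding u_def ugj_paths_Suc
    by (rule card_UN_disjoint) (auto simp: finite_strictly_below finite_ugj_paths,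
        auto simp: ugj_paths_def)
  also have "\<dots> = (\<Sum>t\<in>strictly_below s. u t n)"
    by (simp add: u_def card_image)
  finally show ?thesis .
qed

lemma u_eq_0: "fst s + snd s < n \<Longrightarrow> u s n = 0"
proof (induction n arbitrary: s)
  case (Suc n)
  have "u t n = 0" if "t \<in> strictly_below s" for t
  proof -
    have "fst t + snd t < fst s + snd s"
      using that by (cases s, cases t) (auto simp: strictly_below_iff)
    with Suc show ?thesis by simp
  qed
  then show ?case
    by (simp add: u_Suc)
qed simp

lemma coeff_F: "coeff (F p q) n = int (u (p, q) n)"
  unfolding F_def coeff_sum using u_eq_0[of "(p, q)" n] by (auto simp: coeff_monom)

lemma F_eq_1_plus_X_sum: "F p q = 1 + pCons 0 (\<Sum>t\<in>strictly_below (p, q). F (fst t) (snd t))"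
  by (rule poly_eqI) (simp add: coeff_F coeff_sum u_0 u_Suc coeff_pCons split: nat.split)

definition F_box_sum :: "nat \<Rightarrow> nat \<Rightarrow> int poly" where
  "F_box_sum p q = (\<Sum>a\<le>p. \<Sum>b\<le>q. F a b)"

lemma F_eq_1_plus_X_box_sum: "F p q = 1 + [:0, 1:] * (F_box_sum p q - F p q)"
proof -
  have "(\<Sum>t\<in>strictly_below (p, q). F (fst t) (snd t)) = F_box_sum p q - F p q"
    unfolding strictly_below_def F_box_sum_def
    by (subst sum_diff1) (auto simp: sum.cartesian_product case_prod_beta)
  then show ?thesis
    using F_eq_1_plus_X_sum[of p q] by simp
qed

lemma F_0_0: "F 0 0 = 1"
  using F_eq_1_plus_X_box_sum[of 0 0] by (simp add: F_box_sum_def)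

lemma F_Suc_0: "F (Suc p) 0 = [:1, 1:] * F p 0"
proof -
  define z :: "int poly" where "z = [:0, 1:]"
  have "F (Suc p) 0 = 1 + z * (F_box_sum p 0 + F (Suc p) 0 - F (Suc p) 0)"
    "F p 0 = 1 + z * (F_box_sum p 0 - F p 0)"
    using F_eq_1_plus_X_box_sum[of "Suc p" 0, folded z_def] F_eq_1_plus_X_box_sum[of p 0, folded z_def]
    by (simp_all add: F_box_sum_def)
  moreover have "[:1, 1:] = 1 + z"
    by (simp add: z_def one_pCons)
  ultimately show ?thesis
    by (simp add: algebra_simps)
qed

lemma F_0_Suc: "F 0 (Suc q) = [:1, 1:] * F 0 q"
proof -
  define z :: "int poly" where "z = [:0, 1:]"
  have "F 0 (Suc q) = 1 + z * (F_box_sum 0 q + F 0 (Suc q) - F 0 (Suc q))"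
    "F 0 q = 1 + z * (F_box_sum 0 q - F 0 q)"
    using F_eq_1_plus_X_box_sum[of 0 "Suc q", folded z_def] F_eq_1_plus_X_box_sum[of 0 q, folded z_def]
    by (simp_all add: F_box_sum_def)
  moreover have "[:1, 1:] = 1 + z"
    by (simp add: z_def one_pCons)
  ultimately show ?thesis
    by (simp add: algebra_simps)
qed

lemma F_Suc_Suc: "F (Suc p) (Suc q) = [:1, 1:] * (F p (Suc q) + F (Suc p) q - F p q)"
proof -
  define z :: "int poly" where "z = [:0, 1:]"
  have "F_box_sum (Suc p) (Suc q) = F_box_sum p (Suc q) + F_box_sum (Suc p) q - F_box_sum p q
      + F (Suc p) (Suc q)"
    by (simp add: F_box_sum_def sum.distrib)
  then have "F (Suc p) (Suc q) = 1 + z * (F_box_sum p (Suc q) + F_box_sum (Suc p) q - F_box_sum p q)"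
    using F_eq_1_plus_X_box_sum[of "Suc p" "Suc q", folded z_def] by simp
  moreover have "F p (Suc q) = 1 + z * (F_box_sum p (Suc q) - F p (Suc q))"
    "F (Suc p) q = 1 + z * (F_box_sum (Suc p) q - F (Suc p) q)"
    "F p q = 1 + z * (F_box_sum p q - F p q)"
    using F_eq_1_plus_X_box_sum[folded z_def] by blast+
  moreover have "[:1, 1:] = 1 + z"
    by (simp add: z_def one_pCons)
  ultimately show ?thesis
    by (simp add: algebra_simps)
qed

definition jump_count_formula :: "'a::comm_ring_1 \<Rightarrow> nat \<Rightarrow> nat \<Rightarrow> 'a" where
  "jump_count_formula w p q = coeff ([:w, w * (w - 1):] ^ p * [:1, w:] ^ q) q"

lemma coeff_linear_power_top: "coeff ([:1, w:] ^ n) n = w ^ n"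
proof (induction n)
  case (Suc n)
  have "degree ([:1, w:] ^ n) \<le> degree [:1, w:] * n"
    by (rule degree_power_le)
  also have "\<dots> \<le> n"
    by (cases "w = 0") auto
  finally have "coeff ([:1, w:] ^ n) (Suc n) = 0"
    by (simp add: coeff_eq_0)
  with Suc show ?case
    by simp
qed simp

lemma jump_count_formula_0_right: "jump_count_formula w p 0 = w ^ p"
  by (simp add: jump_count_formula_def coeff_0_power)

lemma jump_count_formula_0_left: "jump_count_formula w 0 q = w ^ q"
  by (simp add: jump_count_formula_def coeff_linear_power_top)

lemma jump_count_formula_Suc_Suc:
  "jump_count_formula w (Suc p) (Suc q)
     = w * (jump_count_formula w p (Suc q) + jump_count_formula w (Suc p) q - jump_count_formula w p q)"
proof -
  define A B X where "A = [:w, w * (w - 1):]" and "B = [:1, w:]" and "X = A ^ p * B ^ q"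
  have "A * B = smult w B + [:0, w:] * A - [:0, w:]"
    by (simp add: A_def B_def algebra_simps)
  then have "A * B * X = smult w (B * X) + [:0, w:] * (A * X) - [:0, w:] * X"
    by (simp only: left_diff_distrib distrib_right mult.assoc mult_smult_left)
  from arg_cong[OF this, of "\<lambda>P. coeff P (Suc q)"]
  have "coeff (A * B * X) (Suc q) = w * (coeff (B * X) (Suc q) + coeff (A * X) q - coeff X q)"
    by (simp add: algebra_simps)
  then show ?thesis
    by (simp add: jump_count_formula_def X_def A_def[symmetric] B_def[symmetric] ac_simps)
qed

lemma F_eq_jump_count_formula: "F p q = jump_count_formula [:1, 1:] p q"
proof (induction p arbitrary: q)
  case 0
  show ?case
    by (induction q) (simp_all add: F_0_0 F_0_Suc jump_count_formula_0_left)
next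
  case (Suc p)
  show ?case
    by (induction q)
      (simp_all add: Suc.IH F_Suc_0 F_Suc_Suc jump_count_formula_0_right jump_count_formula_Suc_Suc)
qed

lemma jump_count_formula_diagonal:
  "jump_count_formula w n n = coeff ([:w, w * (2 * w - 1), w\<^sup>2 * (w - 1):] ^ n) n"
proof -
  have "[:w, w * (w - 1):] * [:1, w:] = [:w, w * (2 * w - 1), w\<^sup>2 * (w - 1):]"
    by (simp add: algebra_simps power2_eq_square)
  then show ?thesis
    by (simp add: jump_count_formula_def flip: power_mult_distrib)
qed

lemma mult_pderiv_power: "p * pderiv (p ^ n) = smult (of_nat n) (p ^ n * pderiv p)"
proof (cases n)
  case (Suc m)
  show ?thesis
    unfolding Suc pderiv_power_Suc by (simp add: mult_ac)
qed simp

lemma coeff_trinomial_mult_Suc: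
  "coeff ([:a, b, c:] * r) (Suc j) = a * coeff r (Suc j) + b * coeff r j + (if j = 0 then 0 else c * coeff r (j - 1))"
  by (cases j) (simp_all add: add.assoc)

lemma trinomial_power_coeff_rec:
  fixes a b c :: "'a::idom"
  shows "of_nat (j + 2) * a * coeff ([:a, b, c:] ^ n) (j + 2)
         + of_nat (j + 1) * b * coeff ([:a, b, c:] ^ n) (j + 1) + of_nat j * c * coeff ([:a, b, c:] ^ n) j
       = of_nat n * (b * coeff ([:a, b, c:] ^ n) (j + 1) + 2 * c * coeff ([:a, b, c:] ^ n) j)"
proof -
  have "coeff ([:a, b, c:] * pderiv ([:a, b, c:] ^ n)) (Suc j)
      = coeff (smult (of_nat n) ([:a, b, c:] ^ n * [:b, 2 * c:])) (Suc j)"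
    by (simp only: mult_pderiv_power pderiv_pCons) simp
  then show ?thesis
    by (cases j)
      (simp_all add: coeff_trinomial_mult_Suc coeff_pderiv algebra_simps numeral_2_eq_2
        mult.commute[of "[:b, 2 * c:]"])
qed

definition central_trinomial_coeff :: "'a::comm_ring_1 \<Rightarrow> 'a \<Rightarrow> 'a \<Rightarrow> nat \<Rightarrow> 'a" where
  "central_trinomial_coeff a b c n = coeff ([:a, b, c:] ^ n) n"

lemma of_nat_Suc_mult_cancel:
  fixes x y :: "'a::{idom, ring_char_0}"
  shows "of_nat (Suc k) * x = of_nat (Suc k) * y \<Longrightarrow> x = y"
  by (simp del: of_nat_Suc)

lemma central_trinomial_coeff_rec_Suc_Suc:
  fixes a b c :: "'a::{idom, ring_char_0}"
  shows "of_nat (k + 3) * central_trinomial_coeff a b c (k + 3)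
       = of_nat (2 * k + 5) * b * central_trinomial_coeff a b c (k + 2)
         - of_nat (k + 2) * (b\<^sup>2 - 4 * a * c) * central_trinomial_coeff a b c (k + 1)"
proof -
  define K :: 'a where "K = of_nat k"
  define s B where "s i = coeff ([:a, b, c:] ^ (k + 1)) (k + i)"
    and "B i = coeff ([:a, b, c:] ^ (k + 2)) (k + i)" for i
  define b3 where "b3 = coeff ([:a, b, c:] ^ (k + 3)) (k + 3)"
  have "of_nat (Suc (Suc k)) * (a * s 2) = of_nat (Suc (Suc k)) * (c * s 0)"
    using trinomial_power_coeff_rec[of k a b c "k + 1"]
    by (simp add: s_def algebra_simps numeral_2_eq_2)
  then have e1: "a * s 2 = c * s 0"
    by (rule of_nat_Suc_mult_cancel)
  have e2: "(K + 3) * a * s 3 + (K + 2) * b * s 2 + (K + 1) * c * s 1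
      = (K + 1) * (b * s 2 + 2 * c * s 1)"
    using trinomial_power_coeff_rec[of "k + 1" a b c "k + 1"]
    by (simp add: s_def K_def algebra_simps numeral_3_eq_3 numeral_2_eq_2)
  have "of_nat (Suc (Suc (Suc k))) * (a * B 3) = of_nat (Suc (Suc (Suc k))) * (c * B 1)"
    using trinomial_power_coeff_rec[of "k + 1" a b c "k + 2"]
    by (simp add: B_def algebra_simps numeral_3_eq_3 numeral_2_eq_2)
  then have e3: "a * B 3 = c * B 1"
    by (rule of_nat_Suc_mult_cancel)
  have e4: "B 2 = a * s 2 + b * s 1 + c * s 0"
    and e5: "B 3 = a * s 3 + b * s 2 + c * s 1"
    and e6: "b3 = a * B 3 + b * B 2 + c * B 1"
    by (simp_all add: s_def B_def b3_def coeff_trinomial_mult_Suc numeral_3_eq_3 numeral_2_eq_2 algebra_simps)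
  have "(K + 3) * b3 = (2 * K + 5) * b * B 2 - (K + 2) * (b\<^sup>2 - 4 * a * c) * s 1"
    using e1 e2 e3 e4 e5 e6 by algebra
  then show ?thesis
    by (simp add: central_trinomial_coeff_def K_def b3_def B_def s_def)
qed

lemma central_trinomial_coeff_rec:
  fixes a b c :: "'a::{idom, ring_char_0}"
  shows "of_nat (Suc n) * central_trinomial_coeff a b c (Suc n)
       = of_nat (2 * n + 1) * b * central_trinomial_coeff a b c n
         - of_nat n * (b\<^sup>2 - 4 * a * c) * central_trinomial_coeff a b c (n - 1)"
proof (cases n)
  case 0
  then show ?thesis
    by (simp add: central_trinomial_coeff_def)
next
  case (Suc m)
  show ?thesis
  proof (cases m)
    case 0
    have "coeff ([:a, b, c:] ^ 2) 2 = b\<^sup>2 + 2 * a * c"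
      by (simp add: power2_eq_square numeral_2_eq_2 algebra_simps)
    with Suc 0 show ?thesis
      by (simp add: central_trinomial_coeff_def numeral_2_eq_2 power2_eq_square algebra_simps)
  next
    case (Suc k)
    with \<open>n = Suc m\<close> have "n = k + 2"
      by simp
    then show ?thesis
      using central_trinomial_coeff_rec_Suc_Suc[of k a b c] by (simp add: numeral_3_eq_3 algebra_simps)
  qed
qed

lemma fps_square_mult_quadratic_eq_1:
  fixes r :: "nat \<Rightarrow> 'a::{idom, ring_char_0}"
  assumes r0: "r 0 = 1"
    and rec: "\<And>n. of_nat (Suc n) * r (Suc n) = of_nat (2 * n + 1) * b * r n - of_nat n * d * r (n - 1)"
  shows "Abs_fps r ^ 2 * (1 - fps_const (2 * b) * fps_X + fps_const d * fps_X ^ 2) = 1"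
proof -
  define R where "R = Abs_fps r"
  define D where "D = 1 - fps_const (2 * b) * fps_X + fps_const d * fps_X ^ 2"
  have G: "2 * fps_deriv R * D + R * fps_deriv D
      = fps_const 2 * fps_deriv R - fps_const (4 * b) * (fps_X * fps_deriv R)
        + fps_const (2 * d) * (fps_X ^ 2 * fps_deriv R) - fps_const (2 * b) * R
        + fps_const (2 * d) * (fps_X * R)"
    by (simp add: D_def algebra_simps numeral_fps_const power2_eq_square)
  have "fps_nth (2 * fps_deriv R * D + R * fps_deriv D) n
      = 2 * (of_nat (Suc n) * r (Suc n) - (of_nat (2 * n + 1) * b * r n - of_nat n * d * r (n - 1)))"
    for n
    unfolding G fps_add_nth fps_sub_nth fps_mult_left_const_nth fps_X_power_mult_nth fps_X_mult_nth
    by (cases n; cases "n - 1") (simp_all add: R_def algebra_simps)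
  then have "2 * fps_deriv R * D + R * fps_deriv D = 0"
    unfolding rec by (simp add: fps_eq_iff)
  moreover have "fps_deriv (R ^ 2 * D) = R * (2 * fps_deriv R * D + R * fps_deriv D)"
    by (simp add: algebra_simps power2_eq_square)
  ultimately have "fps_deriv (R ^ 2 * D) = 0"
    by simp
  then have "R ^ 2 * D = fps_const (fps_nth (R ^ 2 * D) 0)"
    by (rule fps_deriv_eq_0_iff[THEN iffD1])
  also have "fps_nth (R ^ 2 * D) 0 = 1"
    by (simp add: R_def D_def r0 power2_eq_square)
  finally show ?thesis
    by (simp add: R_def D_def)
qed

lemma central_trinomial_coeff_fps:
  fixes a b c :: "'a::{idom, ring_char_0}"
  shows "Abs_fps (central_trinomial_coeff a b c) ^ 2
           * (1 - fps_const (2 * b) * fps_X + fps_const (b\<^sup>2 - 4 * a * c) * fps_X ^ 2) = 1"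
  by (rule fps_square_mult_quadratic_eq_1)
    (simp add: central_trinomial_coeff_def, rule central_trinomial_coeff_rec)

lemma jump_discriminant_eq:
  fixes w :: "'a::comm_ring_1"
  defines "b \<equiv> w * (2 * w - 1)" and "c \<equiv> w\<^sup>2 * (w - 1)"
  shows "(fps_const w * fps_X + 1)\<^sup>2 - fps_const (4 * w\<^sup>2) * fps_X
       = 1 - fps_const (2 * b) * fps_X + fps_const (b\<^sup>2 - 4 * w * c) * fps_X ^ 2"
proof -
  define W where "W = fps_const w"
  have linear: "fps_const (2 * b) = 4 * W\<^sup>2 - 2 * W"
    and quadratic: "fps_const (b\<^sup>2 - 4 * w * c) = W\<^sup>2"
    and const_term: "fps_const (4 * w\<^sup>2) = 4 * W\<^sup>2"
    by (simp_all add: W_def b_def c_def numeral_fps_const power2_eq_square algebra_simps)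
  show ?thesis
    unfolding linear quadratic const_term W_def[symmetric] by (simp add: power2_eq_square algebra_simps)
qed

theorem mainTheorem6:
  fixes w :: "int poly" and D :: "int poly fps"
  assumes "w = [:1, 1:]"
    and "D = (fps_const w * fps_X + 1)\<^sup>2 - fps_const (4 * w\<^sup>2) * fps_X"
  shows "\<exists>S :: int poly fps. fps_nth S 0 = 1 \<and> S\<^sup>2 = D \<and>
           Abs_fps (\<lambda>n. F n n) * S = 1"
proof -
  let ?A = "Abs_fps (\<lambda>n. F n n)"
  have "?A = Abs_fps (central_trinomial_coeff w (w * (2 * w - 1)) (w\<^sup>2 * (w - 1)))"
    unfolding F_eq_jump_count_formula[folded assms(1)] jump_count_formula_diagonal
      central_trinomial_coeff_def ..
  then have inverse_square: "?A ^ 2 * D = 1"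
    using central_trinomial_coeff_fps unfolding assms(2) jump_discriminant_eq by simp
  show ?thesis
  proof (intro exI conjI)
    show "fps_nth (?A * D) 0 = 1"
      by (simp add: assms(2) F_0_0 power2_eq_square)
    show "(?A * D)\<^sup>2 = D" and "?A * (?A * D) = 1"
      using inverse_square by (simp_all add: power2_eq_square algebra_simps)
  qed
qed

end
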